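(* Let $p,q$ be positive integers with $p\ge 2q$. The graph $K_{p/q}$ admits an orientation without alternating odd cycles if and only if $p/q\le 3$.
   Context: The rational complete graph $K_{p/q}$ has vertex set $\{0,1,\dots,p-1\}$, with $a,b$ adjacent iff $q\le|a-b|\le p-q$. An orientation assigns each edge exactly one direction. In an oriented graph, a subgraph that is a cycle is called alternating if at most one of its vertices has both positive in-degree and positive out-degree within that cycle; an alternating odd cycle is an alternating cycle of odd length. *)

theory Defs
  imports Complex_Main
begin

text \<open>Rational complete graph K_{p/q}: vertices 0..p-1, a and b adjacent iff
  q \<le> |a-b| \<le> p-q.\<close>
definition rcg_adj :: "nat \<Rightarrow> nat \<Rightarrow> nat \<Rightarrow> nat \<Rightarrow> bool" where
  "rcg_adj p q a b \<longleftrightarrow> a < p \<and> b < p \<and>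
     int q \<le> \<bar>int a - int b\<bar> \<and> \<bar>int a - int b\<bar> \<le> int p - int q"

definition is_orientation :: "nat \<Rightarrow> nat \<Rightarrow> (nat \<Rightarrow> nat \<Rightarrow> bool) \<Rightarrow> bool" where
  "is_orientation p q D \<longleftrightarrow>
     (\<forall>a b. D a b \<longrightarrow> rcg_adj p q a b) \<and>
     (\<forall>a b. rcg_adj p q a b \<longrightarrow> (D a b \<longleftrightarrow> \<not> D b a))"

definition is_cycle :: "nat \<Rightarrow> nat \<Rightarrow> nat list \<Rightarrow> bool" where
  "is_cycle p q cs \<longleftrightarrow> length cs \<ge> 3 \<and> distinct cs \<and>
     (\<forall>i < length cs. rcg_adj p q (cs ! i) (cs ! ((i + 1) mod length cs)))"

definition cycle_edge :: "nat list \<Rightarrow> nat \<Rightarrow> nat \<Rightarrow> bool" where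
  "cycle_edge cs u v \<longleftrightarrow> (\<exists>i < length cs.
     (u = cs ! i \<and> v = cs ! ((i + 1) mod length cs)) \<or>
     (v = cs ! i \<and> u = cs ! ((i + 1) mod length cs)))"

definition cyc_indeg :: "(nat \<Rightarrow> nat \<Rightarrow> bool) \<Rightarrow> nat list \<Rightarrow> nat \<Rightarrow> nat" where
  "cyc_indeg D cs v = card {u \<in> set cs. cycle_edge cs u v \<and> D u v}"

definition cyc_outdeg :: "(nat \<Rightarrow> nat \<Rightarrow> bool) \<Rightarrow> nat list \<Rightarrow> nat \<Rightarrow> nat" where
  "cyc_outdeg D cs v = card {u \<in> set cs. cycle_edge cs v u \<and> D v u}"

definition alternating :: "(nat \<Rightarrow> nat \<Rightarrow> bool) \<Rightarrow> nat list \<Rightarrow> bool" where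
  "alternating D cs \<longleftrightarrow>
     card {v \<in> set cs. cyc_indeg D cs v > 0 \<and> cyc_outdeg D cs v > 0} \<le> 1"

definition alternating_odd_cycle :: "nat \<Rightarrow> nat \<Rightarrow> (nat \<Rightarrow> nat \<Rightarrow> bool) \<Rightarrow> nat list \<Rightarrow> bool" where
  "alternating_odd_cycle p q D cs \<longleftrightarrow> is_cycle p q cs \<and> odd (length cs) \<and> alternating D cs"

end

theory Submission
  imports Defs
begin

(* If p \<le> 3q, colour a vertex a by the third 3a div p of [0,p) it lies in. Adjacent vertices are
   at least q \<ge> p/3 apart, so this is a proper 3-colouring, and we orient every edge from colour c
   to colour c + 1 (mod 3). On a cycle, every vertex that is a source or a sink has both neighbours
   of the same colour; if all but one vertex of an odd cycle were sources or sinks, walking around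
   the cycle in steps of two would force two adjacent vertices to share a colour.

   If p \<ge> 3q + 1, the residues x mod (3q + 1) span a copy of K_{(3q+1)/q}. An orientation without
   alternating odd cycles has no transitive triangle, so the triangles {x, x + q, x + 2q} are
   directed cycles; hence all arcs x \<rightarrow> x + q point the same way, say forward (otherwise reverse
   the orientation), and x + 2q \<rightarrow> x, i.e. x \<rightarrow> x + q + 1. For m = q + 1, ..., 2q - 1 the
   pentagon x + q + 1, x + 2q + 1, x, x + m + 1, x + q + m + 1 would be alternating unless
   x \<rightarrow> x + m + 1. Inductively x \<rightarrow> x + 2q, contradicting x + 2q \<rightarrow> x. *)

lemma Suc_mod_3_inj: "x < 3 \<Longrightarrow> y < 3 \<Longrightarrow> Suc x mod 3 = Suc y mod 3 \<Longrightarrow> x = (y::nat)"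
  by (auto simp: mod_Suc split: if_splits)

lemma Suc_mod_3_asym:
  "x < 3 \<Longrightarrow> y < 3 \<Longrightarrow> x \<noteq> y \<Longrightarrow> y = Suc x mod 3 \<longleftrightarrow> x \<noteq> Suc y mod (3::nat)"
  by (auto simp: mod_Suc split: if_splits)

lemma odd_period_two_step_propagates:
  fixes g :: "nat \<Rightarrow> 'a"
  assumes "odd n"
    and period: "\<And>k. g (k + n) = g k"
    and two_step: "\<And>k. Suc k mod n \<noteq> j mod n \<Longrightarrow> g (k + 2) = g k"
  shows "g (Suc j) = g j"
proof -
  have walk: "g (Suc j + 2 * s) = g (Suc j)" if "2 * s < n" for s
    using that
  proof (induction s)
    case (Suc s)
    have "\<not> n dvd 2 * s + 2"
      using Suc.prems by (auto dest: dvd_imp_le)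
    then have "Suc (Suc j + 2 * s) mod n \<noteq> j mod n"
      using mod_eq_dvd_iff_nat[of j "Suc (Suc j + 2 * s)" n] by auto
    then have "g (Suc j + 2 * Suc s) = g (Suc j + 2 * s)"
      using two_step[of "Suc j + 2 * s"] by simp
    with Suc show ?case
      by simp
  qed simp
  have "Suc j + 2 * ((n - 1) div 2) = j + n"
    using \<open>odd n\<close> by (auto elim: oddE)
  then show ?thesis
    using walk[of "(n - 1) div 2"] period[of j] \<open>odd n\<close> by (auto elim: oddE)
qed

lemma rcg_adj_sym: "rcg_adj p q a b \<longleftrightarrow> rcg_adj p q b a"
  unfolding rcg_adj_def by auto

lemma cycle_edge_sym: "cycle_edge cs u v \<longleftrightarrow> cycle_edge cs v u"
  unfolding cycle_edge_def by auto

lemma cycle_edge_in_set: "cycle_edge cs u v \<Longrightarrow> u \<in> set cs"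
  unfolding cycle_edge_def by (auto intro!: nth_mem mod_less_divisor)

lemma cycle_edge_iff_zip_rotate1:
  "cycle_edge cs u v \<longleftrightarrow> (u, v) \<in> set (zip cs (rotate1 cs)) \<or> (v, u) \<in> set (zip cs (rotate1 cs))"
proof -
  have "set (zip cs (rotate1 cs)) = {(cs ! i, cs ! (Suc i mod length cs)) | i. i < length cs}"
    unfolding set_zip by (auto simp: nth_rotate1)
  then show ?thesis
    unfolding cycle_edge_def by auto
qed

lemma is_cycle_iff_list_all2_rotate1:
  "is_cycle p q cs \<longleftrightarrow> 3 \<le> length cs \<and> distinct cs \<and> list_all2 (rcg_adj p q) cs (rotate1 cs)"
  unfolding is_cycle_def list_all2_conv_all_nth by (simp add: nth_rotate1)

lemma is_cycle_rotate_3: "is_cycle p q [a, b, c] \<Longrightarrow> is_cycle p q [b, c, a]"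
  by (auto simp: is_cycle_iff_list_all2_rotate1)

lemma is_cycle_swap_3: "is_cycle p q [a, b, c] \<Longrightarrow> is_cycle p q [a, c, b]"
  by (auto simp: is_cycle_iff_list_all2_rotate1 rcg_adj_sym[of p q])

lemma is_cycle_consecutive:
  assumes "is_cycle p q cs" and "n = length cs"
  shows "rcg_adj p q (cs ! (k mod n)) (cs ! (Suc k mod n))"
    and "cycle_edge cs (cs ! (k mod n)) (cs ! (Suc k mod n))"
proof -
  have "0 < n"
    using assms unfolding is_cycle_def by auto
  then have k: "k mod n < n" and Suc_k: "Suc (k mod n) mod n = Suc k mod n"
    by (auto simp: mod_Suc_eq)
  have "rcg_adj p q (cs ! (k mod n)) (cs ! (Suc (k mod n) mod n))"
    using assms k unfolding is_cycle_def by simp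
  then show "rcg_adj p q (cs ! (k mod n)) (cs ! (Suc k mod n))"
    by (simp only: Suc_k)
  show "cycle_edge cs (cs ! (k mod n)) (cs ! (Suc k mod n))"
    unfolding cycle_edge_def using assms(2) k Suc_k by auto
qed

lemma cyc_indeg_eq_0_iff: "cyc_indeg D cs v = 0 \<longleftrightarrow> (\<forall>u. cycle_edge cs u v \<longrightarrow> \<not> D u v)"
  unfolding cyc_indeg_def by (auto dest: cycle_edge_in_set)

lemma cyc_outdeg_eq_0_iff: "cyc_outdeg D cs v = 0 \<longleftrightarrow> (\<forall>u. cycle_edge cs v u \<longrightarrow> \<not> D v u)"
  unfolding cyc_outdeg_def by (auto simp: cycle_edge_sym dest: cycle_edge_in_set)

lemma alternatingI:
  assumes "\<And>v. v \<in> set cs \<Longrightarrow> v \<noteq> b \<Longrightarrow> cyc_indeg D cs v = 0 \<or> cyc_outdeg D cs v = 0"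
  shows "alternating D cs"
proof -
  have "{v \<in> set cs. 0 < cyc_indeg D cs v \<and> 0 < cyc_outdeg D cs v} \<subseteq> {b}"
    using assms by fastforce
  from card_mono[OF _ this] show ?thesis
    unfolding alternating_def by simp
qed

lemma alternating_obtain_centre:
  assumes "alternating D cs" and "distinct cs" and "cs \<noteq> []"
  obtains j where "j < length cs"
    and "\<And>i. i < length cs \<Longrightarrow> i \<noteq> j \<Longrightarrow> cyc_indeg D cs (cs ! i) = 0 \<or> cyc_outdeg D cs (cs ! i) = 0"
proof -
  let ?S = "{v \<in> set cs. 0 < cyc_indeg D cs v \<and> 0 < cyc_outdeg D cs v}"
  have "card ?S \<le> 1"
    using assms(1) unfolding alternating_def .
  then have unique: "u = v" if "u \<in> ?S" "v \<in> ?S" for u v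
    using that by (simp add: card_le_Suc0_iff_eq)
  show ?thesis
  proof (cases "\<exists>j < length cs. cs ! j \<in> ?S")
    case True
    then obtain j where j: "j < length cs" "cs ! j \<in> ?S"
      by blast
    show ?thesis
    proof (rule that[OF j(1)])
      fix i assume i: "i < length cs" "i \<noteq> j"
      with j assms(2) have "cs ! i \<noteq> cs ! j"
        by (simp add: nth_eq_iff_index_eq)
      with unique j(2) have "cs ! i \<notin> ?S"
        by blast
      with i(1) show "cyc_indeg D cs (cs ! i) = 0 \<or> cyc_outdeg D cs (cs ! i) = 0"
        by auto
    qed
  next
    case False
    with assms(3) show ?thesis
      by (intro that[of 0]) auto
  qed
qed

lemma is_orientation_converse:
  assumes "is_orientation p q D"
  shows "is_orientation p q (\<lambda>a b. D b a)"
  unfolding is_orientation_def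
proof (intro conjI allI impI)
  fix a b
  show "D b a \<Longrightarrow> rcg_adj p q a b"
    using assms rcg_adj_sym[of p q a b] unfolding is_orientation_def by blast
  show "rcg_adj p q a b \<Longrightarrow> D b a \<longleftrightarrow> \<not> D a b"
    using assms rcg_adj_sym[of p q a b] unfolding is_orientation_def by blast
qed

(* Not a simp rule: its left-hand side matches every term "alternating D cs" up to eta. *)
lemma alternating_converse: "alternating (\<lambda>a b. D b a) cs \<longleftrightarrow> alternating D cs"
proof -
  have "cyc_indeg (\<lambda>a b. D b a) cs = cyc_outdeg D cs"
    and "cyc_outdeg (\<lambda>a b. D b a) cs = cyc_indeg D cs"
    unfolding cyc_indeg_def cyc_outdeg_def by (simp_all add: cycle_edge_sym[of cs] fun_eq_iff)
  then show ?thesis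
    unfolding alternating_def by (simp add: conj_commute)
qed

section \<open>Orientations induced by proper 3-colourings\<close>

definition proper_3_colouring :: "nat \<Rightarrow> nat \<Rightarrow> (nat \<Rightarrow> nat) \<Rightarrow> bool" where
  "proper_3_colouring p q col \<longleftrightarrow>
     (\<forall>a < p. col a < 3) \<and> (\<forall>a b. rcg_adj p q a b \<longrightarrow> col a \<noteq> col b)"

definition colour_orientation :: "nat \<Rightarrow> nat \<Rightarrow> (nat \<Rightarrow> nat) \<Rightarrow> nat \<Rightarrow> nat \<Rightarrow> bool" where
  "colour_orientation p q col a b \<longleftrightarrow> rcg_adj p q a b \<and> col b = Suc (col a) mod 3"

lemma proper_3_colouring_thirds:
  assumes "p \<le> 3 * q"
  shows "proper_3_colouring p q (\<lambda>a. 3 * a div p)"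
  unfolding proper_3_colouring_def
proof (intro conjI allI impI)
  fix a assume "a < p"
  then show "3 * a div p < 3"
    by (intro less_mult_imp_div_less) simp
next
  fix a b assume "rcg_adj p q a b"
  then have "q + a \<le> b \<or> q + b \<le> a" and "b < p"
    unfolding rcg_adj_def by auto
  then have "3 * a + p \<le> 3 * b \<or> 3 * b + p \<le> 3 * a"
    using assms by linarith
  moreover have "(3 * a + p) div p = Suc (3 * a div p)" "(3 * b + p) div p = Suc (3 * b div p)"
    using \<open>b < p\<close> by simp_all
  ultimately show "3 * a div p \<noteq> 3 * b div p"
    using div_le_mono[of "3 * a + p" "3 * b" p] div_le_mono[of "3 * b + p" "3 * a" p] by linarith
qed

lemma proper_3_colouringD:
  assumes "proper_3_colouring p q col" and "rcg_adj p q a b"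
  shows "col a < 3" and "col b < 3" and "col a \<noteq> col b"
  using assms unfolding proper_3_colouring_def rcg_adj_def by auto

lemma colour_orientation_arc_iff:
  assumes "rcg_adj p q a b"
  shows "colour_orientation p q col a b \<longleftrightarrow> col b = Suc (col a) mod 3"
    and "colour_orientation p q col b a \<longleftrightarrow> col a = Suc (col b) mod 3"
  using assms rcg_adj_sym[of p q a b] unfolding colour_orientation_def by simp_all

lemma is_orientation_colour_orientation:
  assumes "proper_3_colouring p q col"
  shows "is_orientation p q (colour_orientation p q col)"
  unfolding is_orientation_def
proof (intro conjI allI impI)
  fix a b assume "colour_orientation p q col a b"
  then show "rcg_adj p q a b"
    unfolding colour_orientation_def by simp
next
  fix a b assume adj: "rcg_adj p q a b"
  have "col b = Suc (col a) mod 3 \<longleftrightarrow> col a \<noteq> Suc (col b) mod 3"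
    using proper_3_colouringD[OF assms adj] by (intro Suc_mod_3_asym)
  then show "colour_orientation p q col a b \<longleftrightarrow> \<not> colour_orientation p q col b a"
    using colour_orientation_arc_iff[OF adj] by simp
qed

lemma colour_orientation_source_or_sink:
  assumes col: "proper_3_colouring p q col"
    and adj: "rcg_adj p q u w" "rcg_adj p q w x"
    and source_or_sink:
      "\<not> colour_orientation p q col u w \<and> \<not> colour_orientation p q col x w \<or>
       \<not> colour_orientation p q col w u \<and> \<not> colour_orientation p q col w x"
  shows "col u = col x"
proof -
  have "col u < 3" "col w < 3" "col x < 3" "col u \<noteq> col w" "col w \<noteq> col x"
    using proper_3_colouringD[OF col adj(1)] proper_3_colouringD[OF col adj(2)] by auto
  then show ?thesis
    using source_or_sink colour_orientation_arc_iff[OF adj(1)] colour_orientation_arc_iff[OF adj(2)]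
      Suc_mod_3_asym Suc_mod_3_inj
    by metis
qed

lemma colour_orientation_cycle_source_or_sink:
  assumes col: "proper_3_colouring p q col" and cyc: "is_cycle p q cs" and n: "n = length cs"
    and source_or_sink: "cyc_indeg (colour_orientation p q col) cs (cs ! (Suc k mod n)) = 0 \<or>
      cyc_outdeg (colour_orientation p q col) cs (cs ! (Suc k mod n)) = 0"
  shows "col (cs ! (k mod n)) = col (cs ! (Suc (Suc k) mod n))"
proof -
  let ?D = "colour_orientation p q col"
  let ?u = "cs ! (k mod n)" and ?w = "cs ! (Suc k mod n)" and ?x = "cs ! (Suc (Suc k) mod n)"
  have "\<not> ?D ?u ?w \<and> \<not> ?D ?x ?w \<or> \<not> ?D ?w ?u \<and> \<not> ?D ?w ?x"
    using source_or_sink is_cycle_consecutive(2)[OF cyc n, of k] is_cycle_consecutive(2)[OF cyc n, of "Suc k"]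
    unfolding cyc_indeg_eq_0_iff cyc_outdeg_eq_0_iff by (auto simp: cycle_edge_sym)
  then show ?thesis
    by (rule colour_orientation_source_or_sink[OF col is_cycle_consecutive(1)[OF cyc n, of k]
        is_cycle_consecutive(1)[OF cyc n, of "Suc k"]])
qed

lemma colour_orientation_no_alternating_odd_cycle:
  assumes col: "proper_3_colouring p q col"
  shows "\<not> alternating_odd_cycle p q (colour_orientation p q col) cs"
proof
  let ?D = "colour_orientation p q col"
  define n where "n = length cs"
  define g where "g k = col (cs ! (k mod n))" for k
  assume "alternating_odd_cycle p q ?D cs"
  then have cyc: "is_cycle p q cs" and "odd n" and "alternating ?D cs"
    unfolding alternating_odd_cycle_def n_def by auto
  then have "distinct cs" "cs \<noteq> []"
    unfolding is_cycle_def by auto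
  then obtain j where "j < n" and centre:
    "\<And>i. i < n \<Longrightarrow> i \<noteq> j \<Longrightarrow> cyc_indeg ?D cs (cs ! i) = 0 \<or> cyc_outdeg ?D cs (cs ! i) = 0"
    using alternating_obtain_centre[OF \<open>alternating ?D cs\<close>] unfolding n_def by blast
  have two_step: "g (k + 2) = g k" if "Suc k mod n \<noteq> j mod n" for k
    using colour_orientation_cycle_source_or_sink[OF col cyc n_def, of k] centre[of "Suc k mod n"]
      that \<open>j < n\<close>
    unfolding g_def by simp
  have "g (Suc j) = g j"
  proof (rule odd_period_two_step_propagates[OF \<open>odd n\<close>])
    show "g (k + n) = g k" for k
      by (simp add: g_def)
  qed (rule two_step)
  moreover have "g j \<noteq> g (Suc j)"
    using proper_3_colouringD(3)[OF col is_cycle_consecutive(1)[OF cyc n_def, of j]]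
    unfolding g_def .
  ultimately show False
    by simp
qed

section \<open>Orientations without alternating odd cycles\<close>

definition ring_vertex :: "nat \<Rightarrow> nat \<Rightarrow> nat" where
  "ring_vertex q k = k mod (3 * q + 1)"

lemma ring_vertex_add_period: "ring_vertex q (k + (3 * q + 1)) = ring_vertex q k"
  unfolding ring_vertex_def by (rule mod_add_self2)

lemma ring_vertex_neq:
  assumes "i < j" and "j < i + (3 * q + 1)"
  shows "ring_vertex q (x + i) \<noteq> ring_vertex q (x + j)"
proof
  assume "ring_vertex q (x + i) = ring_vertex q (x + j)"
  then have "(3 * q + 1) dvd j - i"
    unfolding ring_vertex_def using mod_eq_dvd_iff_nat[of "x + i" "x + j" "3 * q + 1"] assms by simp
  with assms show False
    by (auto dest: dvd_imp_le)
qed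

lemma rcg_adj_ring_vertex:
  assumes "3 * q + 1 \<le> p" and "i + q \<le> j" and "j \<le> i + (2 * q + 1)"
  shows "rcg_adj p q (ring_vertex q (x + i)) (ring_vertex q (x + j))"
proof -
  define a where "a = ring_vertex q (x + i)"
  have "a < 3 * q + 1"
    unfolding a_def ring_vertex_def by simp
  have "x + j = (x + i) + (j - i)"
    using assms by simp
  then have "ring_vertex q (x + j) = (a + (j - i)) mod (3 * q + 1)"
    unfolding a_def ring_vertex_def by (metis mod_add_left_eq)
  also have "\<dots> = (if a + (j - i) < 3 * q + 1 then a + (j - i) else a + (j - i) - (3 * q + 1))"
    using \<open>a < 3 * q + 1\<close> assms by (simp add: mod_if)
  finally show ?thesis
    using \<open>a < 3 * q + 1\<close> assms unfolding a_def[symmetric] rcg_adj_def by auto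
qed

locale alternating_odd_cycle_free =
  fixes p q :: nat and D :: "nat \<Rightarrow> nat \<Rightarrow> bool"
  assumes orientation: "is_orientation p q D"
    and no_alternating_odd_cycle: "\<not> alternating_odd_cycle p q D cs"
begin

lemma converse: "alternating_odd_cycle_free p q (\<lambda>a b. D b a)"
proof
  show "is_orientation p q (\<lambda>a b. D b a)"
    using orientation by (rule is_orientation_converse)
  show "\<not> alternating_odd_cycle p q (\<lambda>a b. D b a) cs" for cs
    using no_alternating_odd_cycle[of cs] alternating_converse[of D cs]
    unfolding alternating_odd_cycle_def by simp
qed

lemma arc_asym: "D a b \<Longrightarrow> \<not> D b a"
  using orientation unfolding is_orientation_def by blast

lemma arc_total: "rcg_adj p q a b \<Longrightarrow> \<not> D a b \<Longrightarrow> D b a"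
  using orientation unfolding is_orientation_def by blast

lemma no_transitive_triangle:
  assumes cyc: "is_cycle p q [a, b, c]" and arcs: "D a b" "D b c" "D a c"
  shows False
proof -
  have "distinct [a, b, c]"
    using cyc unfolding is_cycle_def by simp
  then have "cyc_indeg D [a, b, c] a = 0" "cyc_outdeg D [a, b, c] c = 0"
    using arcs arc_asym
    by (auto simp: cyc_indeg_eq_0_iff cyc_outdeg_eq_0_iff cycle_edge_iff_zip_rotate1)
  then have "alternating D [a, b, c]"
    by (intro alternatingI[where b = b]) auto
  with cyc show False
    using no_alternating_odd_cycle[of "[a, b, c]"] unfolding alternating_odd_cycle_def by simp
qed

lemma triangle_cyclic:
  assumes cyc: "is_cycle p q [a, b, c]"
  shows "D a b \<longleftrightarrow> D b c"
proof -
  have adj: "rcg_adj p q a b" "rcg_adj p q b c" "rcg_adj p q c a"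
    using cyc by (simp_all add: is_cycle_iff_list_all2_rotate1)
  have cycs: "is_cycle p q [a, c, b]" "is_cycle p q [c, a, b]" "is_cycle p q [b, a, c]"
    "is_cycle p q [b, c, a]"
    using cyc is_cycle_rotate_3 is_cycle_swap_3 by blast+
  show ?thesis
    using no_transitive_triangle[OF cycs(1)] no_transitive_triangle[OF cycs(2)]
      no_transitive_triangle[OF cycs(3)] no_transitive_triangle[OF cycs(4)]
      arc_total[OF adj(1)] arc_total[OF adj(2)] arc_total[OF adj(3)] arc_asym
    by metis
qed

lemma no_alternating_pentagon:
  assumes cyc: "is_cycle p q [a, b, c, d, e]"
    and arcs: "D a b" "D b c" "D d c" "D d e" "D a e"
  shows False
proof -
  let ?cs = "[a, b, c, d, e]"
  have "distinct ?cs"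
    using cyc unfolding is_cycle_def by simp
  then have "cyc_indeg D ?cs a = 0" "cyc_outdeg D ?cs c = 0" "cyc_indeg D ?cs d = 0"
    "cyc_outdeg D ?cs e = 0"
    using arcs arc_asym
    by (auto simp: cyc_indeg_eq_0_iff cyc_outdeg_eq_0_iff cycle_edge_iff_zip_rotate1)
  then have "alternating D ?cs"
    by (intro alternatingI[where b = b]) auto
  with cyc show False
    using no_alternating_odd_cycle[of ?cs] unfolding alternating_odd_cycle_def by simp
qed

context
  assumes q_pos: "0 < q" and ring_fits: "3 * q + 1 \<le> p"
begin

lemma ring_triangle_is_cycle:
  "is_cycle p q [ring_vertex q x, ring_vertex q (x + q), ring_vertex q (x + 2 * q)]"
proof -
  have "distinct [ring_vertex q (x + 0), ring_vertex q (x + q), ring_vertex q (x + 2 * q)]"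
    using ring_vertex_neq[of 0 q q x] ring_vertex_neq[of 0 "2 * q" q x]
      ring_vertex_neq[of q "2 * q" q x] q_pos
    by auto
  moreover have "rcg_adj p q (ring_vertex q (x + 0)) (ring_vertex q (x + q))"
    "rcg_adj p q (ring_vertex q (x + q)) (ring_vertex q (x + 2 * q))"
    "rcg_adj p q (ring_vertex q (x + 0)) (ring_vertex q (x + 2 * q))"
    using ring_fits by (intro rcg_adj_ring_vertex; simp)+
  ultimately show ?thesis
    by (simp add: is_cycle_iff_list_all2_rotate1 rcg_adj_sym[of p q "ring_vertex q (x + 2 * q)"])
qed

lemma ring_step_triangle:
  shows "D (ring_vertex q x) (ring_vertex q (x + q)) \<longleftrightarrow>
      D (ring_vertex q (x + q)) (ring_vertex q (x + 2 * q))"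
    and "D (ring_vertex q (x + q)) (ring_vertex q (x + 2 * q)) \<longleftrightarrow>
      D (ring_vertex q (x + 2 * q)) (ring_vertex q x)"
  using triangle_cyclic[OF ring_triangle_is_cycle]
    triangle_cyclic[OF is_cycle_rotate_3[OF ring_triangle_is_cycle]]
  by blast+

lemma ring_steps_same_direction:
  "D (ring_vertex q x) (ring_vertex q (x + q)) \<longleftrightarrow> D (ring_vertex q 0) (ring_vertex q q)"
proof -
  define step where "step x \<longleftrightarrow> D (ring_vertex q x) (ring_vertex q (x + q))" for x
  have step_add_q: "step (x + q) \<longleftrightarrow> step x" for x
    using ring_step_triangle(1)[of x] unfolding step_def by (simp add: mult_2 add.assoc)
  have "step (Suc x) \<longleftrightarrow> step x" for x
  proof -
    have "step (Suc x) \<longleftrightarrow> step (Suc x + q + q + q)"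
      by (simp only: step_add_q)
    also have "Suc x + q + q + q = x + (3 * q + 1)"
      by simp
    also have "step \<dots> \<longleftrightarrow> step x"
      unfolding step_def by (metis ring_vertex_add_period add.assoc add.commute)
    finally show ?thesis .
  qed
  then have "step x \<longleftrightarrow> step 0"
    by (induction x) simp_all
  then show ?thesis
    unfolding step_def by simp
qed

lemma ring_pentagon_is_cycle:
  assumes "q + 1 \<le> m" and "m + 1 \<le> 2 * q"
  shows "is_cycle p q [ring_vertex q (x + (q + 1)), ring_vertex q (x + (2 * q + 1)), ring_vertex q x,
    ring_vertex q (x + (m + 1)), ring_vertex q (x + (q + m + 1))]"
proof -
  let ?v = "\<lambda>i. ring_vertex q (x + i)"
  have "distinct [?v (q + 1), ?v (2 * q + 1), ?v 0, ?v (m + 1), ?v (q + m + 1)]"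
    using assms ring_vertex_neq[of 0 "q + 1" q x] ring_vertex_neq[of 0 "2 * q + 1" q x]
      ring_vertex_neq[of 0 "m + 1" q x] ring_vertex_neq[of 0 "q + m + 1" q x]
      ring_vertex_neq[of "q + 1" "2 * q + 1" q x] ring_vertex_neq[of "q + 1" "m + 1" q x]
      ring_vertex_neq[of "q + 1" "q + m + 1" q x] ring_vertex_neq[of "m + 1" "2 * q + 1" q x]
      ring_vertex_neq[of "2 * q + 1" "q + m + 1" q x] ring_vertex_neq[of "m + 1" "q + m + 1" q x]
    by auto
  moreover have "rcg_adj p q (?v (q + 1)) (?v (2 * q + 1))"
    "rcg_adj p q (?v (2 * q + 1)) (?v (3 * q + 1))" "rcg_adj p q (?v 0) (?v (m + 1))"
    "rcg_adj p q (?v (m + 1)) (?v (q + m + 1))"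
    using assms ring_fits by (intro rcg_adj_ring_vertex; simp)+
  moreover have "rcg_adj p q (?v (q + m + 1)) (?v (q + 1))"
    using assms ring_fits by (subst rcg_adj_sym) (intro rcg_adj_ring_vertex; simp)
  moreover have "?v (3 * q + 1) = ring_vertex q x"
    by (rule ring_vertex_add_period)
  ultimately show ?thesis
    by (simp add: is_cycle_iff_list_all2_rotate1)
qed

lemma ring_long_arcs_forward:
  assumes forward: "\<And>x. D (ring_vertex q x) (ring_vertex q (x + q))"
    and "k < q"
  shows "D (ring_vertex q x) (ring_vertex q (x + (q + 1 + k)))"
  using \<open>k < q\<close>
proof (induction k arbitrary: x)
  case 0
  have "D (ring_vertex q (x + (q + 1) + 2 * q)) (ring_vertex q (x + (q + 1)))"
    using ring_step_triangle[of "x + (q + 1)"] forward by blast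
  moreover have "x + (q + 1) + 2 * q = x + (3 * q + 1)"
    by simp
  ultimately show ?case
    by (simp only: ring_vertex_add_period add_0_right)
next
  case (Suc k)
  define m where "m = q + 1 + k"
  have m: "q + 1 \<le> m" "m + 1 \<le> 2 * q"
    using Suc.prems unfolding m_def by auto
  let ?v = "\<lambda>i. ring_vertex q (x + i)"
  have step: "D (?v i) (?v j)" if "j = i + q" for i j
    using forward[of "x + i"] unfolding that by (simp add: add.assoc)
  have ab: "D (?v (q + 1)) (?v (2 * q + 1))" and de: "D (?v (m + 1)) (?v (q + m + 1))"
    by (rule step; simp)+
  have bc: "D (?v (2 * q + 1)) (ring_vertex q x)"
    unfolding ring_vertex_add_period[of q x, symmetric] by (rule step) simp
  have ae: "D (?v (q + 1)) (?v (q + m + 1))"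
    using Suc.IH[of "x + (q + 1)"] Suc.prems unfolding m_def by (simp add: add.assoc)
  have "\<not> D (?v (m + 1)) (ring_vertex q x)"
    using no_alternating_pentagon[OF ring_pentagon_is_cycle[OF m] ab bc _ de ae] by blast
  moreover have "rcg_adj p q (ring_vertex q (x + 0)) (?v (m + 1))"
    using m ring_fits by (intro rcg_adj_ring_vertex) auto
  ultimately have "D (ring_vertex q x) (?v (m + 1))"
    using arc_total by auto
  then show ?case
    by (simp add: m_def)
qed

lemma not_all_ring_steps_forward: "\<not> (\<forall>x. D (ring_vertex q x) (ring_vertex q (x + q)))"
proof
  assume forward: "\<forall>x. D (ring_vertex q x) (ring_vertex q (x + q))"
  have "D (ring_vertex q 0) (ring_vertex q (2 * q))"
    using ring_long_arcs_forward[of "q - 1" 0] forward q_pos by (simp add: mult_2)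
  moreover have "D (ring_vertex q (2 * q)) (ring_vertex q 0)"
    using ring_step_triangle[of 0] forward[rule_format, of 0] by simp
  ultimately show False
    using arc_asym by blast
qed

end

lemma p_le_3q:
  assumes "0 < q"
  shows "p \<le> 3 * q"
proof (rule ccontr)
  assume "\<not> p \<le> 3 * q"
  then have fits: "3 * q + 1 \<le> p"
    by simp
  interpret converse: alternating_odd_cycle_free p q "\<lambda>a b. D b a"
    by (rule converse)
  have "rcg_adj p q (ring_vertex q (0 + 0)) (ring_vertex q (0 + q))"
    using fits by (intro rcg_adj_ring_vertex) auto
  then consider "D (ring_vertex q 0) (ring_vertex q q)" | "D (ring_vertex q q) (ring_vertex q 0)"
    using arc_total by auto
  then show False
  proof cases
    case 1
    then show False
      using not_all_ring_steps_forward[OF assms fits] ring_steps_same_direction[OF assms fits]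
      by blast
  next
    case 2
    then show False
      using converse.not_all_ring_steps_forward[OF assms fits]
        converse.ring_steps_same_direction[OF assms fits]
      by blast
  qed
qed

end

theorem mainTheorem9:
  fixes p q :: nat
  assumes "p > 0" "q > 0" "p \<ge> 2 * q"
  shows "(\<exists>D. is_orientation p q D \<and> \<not> (\<exists>cs. alternating_odd_cycle p q D cs))
           \<longleftrightarrow> (of_nat p :: rat) / of_nat q \<le> 3"
proof -
  have "(of_nat p :: rat) / of_nat q \<le> 3 \<longleftrightarrow> of_nat p \<le> (of_nat (3 * q) :: rat)"
    using \<open>q > 0\<close> by (simp add: divide_le_eq)
  then have ratio_iff: "(of_nat p :: rat) / of_nat q \<le> 3 \<longleftrightarrow> p \<le> 3 * q"
    by (simp only: of_nat_le_iff)
  have "p \<le> 3 * q \<Longrightarrow> alternating_odd_cycle_free p q (colour_orientation p q (\<lambda>a. 3 * a div p))"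
    using proper_3_colouring_thirds is_orientation_colour_orientation
      colour_orientation_no_alternating_odd_cycle
    by (blast intro: alternating_odd_cycle_free.intro)
  then show ?thesis
    unfolding ratio_iff using alternating_odd_cycle_free.p_le_3q[OF _ \<open>q > 0\<close>]
    by (auto simp: alternating_odd_cycle_free_def)
qed

end
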